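(* In the setting of the context, if $\mathcal{Q}\cap\mathcal{M}\ne\emptyset$, then the market does not admit strong $\rho$-arbitrage.
   Context: Let $(\Omega,\mathcal{F},\mathbb{P})$ be a probability space and a market: riskless asset $S^0_0=1$, $S^0_1=1+r$, $r>-1$; risky assets $S^1,\dots,S^d$ with constants $S^i_0>0$ and real-valued $\mathcal{F}$-measurable $S^i_1$; returns $R^i:=(S^i_1-S^i_0)/S^i_0$. Standing assumptions: nonredundancy (if $\theta\in\mathbb{R}^{1+d}$ with $\sum_{i=0}^d\theta^iS^i_t=0$ a.s. for $t\in\{0,1\}$ then $\theta=0$), $R^i\in L^1$, $\mathbb{E}[R^i]\ne r$ for some $i$. Excess return: $X_\pi:=\pi\cdot(R-r\mathbf{1})$. $L$ is a Riesz space with $L^\infty\subset L\subset L^1$ containing all $X_\pi$. $\mathcal{D}:=\{Z\in L^1:Z\ge0,\mathbb{E}[Z]=1\}$; $\mathcal{Q}\subset\mathcal{D}$ is convex with $1\in\mathcal{Q}$ and $\rho(X)=\sup_{Z\in\mathcal{Q}}\mathbb{E}[-ZX]$ on $L$, with $\mathbb{E}[-ZX]:=\mathbb{E}[ZX^-]-\mathbb{E}[ZX^+]$ and $\mathbb{E}[-ZX]=\infty$ if $\mathbb{E}[ZX^-]=\infty$. $\mathcal{M}:=\{Z\in\mathcal{D}:\mathbb{E}[Z(R^i-r)]=0\ \forall i\}$. Strong $\rho$-arbitrage: for every $\pi$ there is $\pi'$ with $\mathbb{E}[X_{\pi'}]>\mathbb{E}[X_\pi]$ and $\rho(X_{\pi'})<\rho(X_\pi)$.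 *)

theory Defs
  imports "HOL-Probability.Probability"
begin

text \<open>Market: riskless asset with S0_0 = 1, S0_1 = 1 + r; risky assets indexed by
  i in {1..d} with initial prices S0 i (constants) and terminal prices S1 i (random variables).
  Portfolios are functions pi :: nat => real, only the values on {1..d} matter.\<close>

definition ret :: "(nat \<Rightarrow> real) \<Rightarrow> (nat \<Rightarrow> 'a \<Rightarrow> real) \<Rightarrow> nat \<Rightarrow> 'a \<Rightarrow> real" where
  "ret S0 S1 i \<omega> = (S1 i \<omega> - S0 i) / S0 i"

definition excess_return ::
  "real \<Rightarrow> nat \<Rightarrow> (nat \<Rightarrow> real) \<Rightarrow> (nat \<Rightarrow> 'a \<Rightarrow> real) \<Rightarrow> (nat \<Rightarrow> real) \<Rightarrow> 'a \<Rightarrow> real" where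
  "excess_return r d S0 S1 \<pi> \<omega> = (\<Sum>i\<in>{1..d}. \<pi> i * (ret S0 S1 i \<omega> - r))"

definition nonredundant ::
  "'a measure \<Rightarrow> real \<Rightarrow> nat \<Rightarrow> (nat \<Rightarrow> real) \<Rightarrow> (nat \<Rightarrow> 'a \<Rightarrow> real) \<Rightarrow> bool" where
  "nonredundant M r d S0 S1 \<longleftrightarrow>
     (\<forall>\<theta>0 (\<theta> :: nat \<Rightarrow> real).
        (\<theta>0 * 1 + (\<Sum>i\<in>{1..d}. \<theta> i * S0 i) = 0 \<and>
         (AE \<omega> in M. \<theta>0 * (1 + r) + (\<Sum>i\<in>{1..d}. \<theta> i * S1 i \<omega>) = 0))
        \<longrightarrow> \<theta>0 = 0 \<and> (\<forall>i\<in>{1..d}. \<theta> i = 0))"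

text \<open>Riesz space L of random variables with L^infty \<subseteq> L \<subseteq> L^1
  (rendered on representatives: a linear sublattice of the integrable functions
  containing all bounded measurable functions).\<close>
definition riesz_between :: "'a measure \<Rightarrow> ('a \<Rightarrow> real) set \<Rightarrow> bool" where
  "riesz_between M L \<longleftrightarrow>
     (\<forall>X\<in>L. integrable M X) \<and>
     (\<forall>X. X \<in> borel_measurable M \<and> (\<exists>B. \<forall>\<omega>\<in>space M. \<bar>X \<omega>\<bar> \<le> B) \<longrightarrow> X \<in> L) \<and>
     (\<forall>X\<in>L. \<forall>Y\<in>L. (\<lambda>\<omega>. X \<omega> + Y \<omega>) \<in> L) \<and>
     (\<forall>X\<in>L. \<forall>c::real. (\<lambda>\<omega>. c * X \<omega>) \<in> L) \<and>
     (\<forall>X\<in>L. \<forall>Y\<in>L. (\<lambda>\<omega>. max (X \<omega>) (Y \<omega>)) \<in> L)"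

definition densities :: "'a measure \<Rightarrow> ('a \<Rightarrow> real) set" where
  "densities M = {Z. integrable M Z \<and> (AE \<omega> in M. 0 \<le> Z \<omega>) \<and> (\<integral>\<omega>. Z \<omega> \<partial>M) = 1}"

definition mart_densities ::
  "'a measure \<Rightarrow> real \<Rightarrow> nat \<Rightarrow> (nat \<Rightarrow> real) \<Rightarrow> (nat \<Rightarrow> 'a \<Rightarrow> real) \<Rightarrow> ('a \<Rightarrow> real) set" where
  "mart_densities M r d S0 S1 =
     {Z \<in> densities M. \<forall>i\<in>{1..d}.
        integrable M (\<lambda>\<omega>. Z \<omega> * (ret S0 S1 i \<omega> - r)) \<and>
        (\<integral>\<omega>. Z \<omega> * (ret S0 S1 i \<omega> - r) \<partial>M) = 0}"

definition neg_expect :: "'a measure \<Rightarrow> ('a \<Rightarrow> real) \<Rightarrow> ('a \<Rightarrow> real) \<Rightarrow> ereal" where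
  "neg_expect M Z X =
     (let En = (\<integral>\<^sup>+\<omega>. ennreal (Z \<omega> * max (- X \<omega>) 0) \<partial>M);
          Ep = (\<integral>\<^sup>+\<omega>. ennreal (Z \<omega> * max (X \<omega>) 0) \<partial>M)
      in if En = \<infinity> then \<infinity> else enn2ereal En - enn2ereal Ep)"

definition rho :: "'a measure \<Rightarrow> ('a \<Rightarrow> real) set \<Rightarrow> ('a \<Rightarrow> real) \<Rightarrow> ereal" where
  "rho M Q X = (SUP Z\<in>Q. neg_expect M Z X)"

definition strong_rho_arbitrage ::
  "'a measure \<Rightarrow> ('a \<Rightarrow> real) set \<Rightarrow> real \<Rightarrow> nat \<Rightarrow> (nat \<Rightarrow> real) \<Rightarrow> (nat \<Rightarrow> 'a \<Rightarrow> real) \<Rightarrow> bool" where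
  "strong_rho_arbitrage M Q r d S0 S1 \<longleftrightarrow>
     (\<forall>\<pi>. \<exists>\<pi>'. (\<integral>\<omega>. excess_return r d S0 S1 \<pi>' \<omega> \<partial>M) > (\<integral>\<omega>. excess_return r d S0 S1 \<pi> \<omega> \<partial>M)
              \<and> rho M Q (excess_return r d S0 S1 \<pi>') < rho M Q (excess_return r d S0 S1 \<pi>))"

end

theory Submission
  imports Defs
begin

text \<open>Take a martingale density Z in Q. The zero portfolio has risk rho(0) = 0, while every
  excess return X satisfies rho(X) \<ge> E[-Z X] = 0. Hence no portfolio has strictly smaller risk
  than the zero portfolio, so strong rho-arbitrage fails already at pi = 0.\<close>

lemma neg_expect_eq_integral:
  assumes Z_nonneg: "AE \<omega> in M. 0 \<le> Z \<omega>"
    and int: "integrable M (\<lambda>\<omega>. Z \<omega> * X \<omega>)"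
  shows "neg_expect M Z X = - ereal (\<integral>\<omega>. Z \<omega> * X \<omega> \<partial>M)"
proof -
  obtain p q where "0 \<le> p" "0 \<le> q"
    and pos: "(\<integral>\<^sup>+\<omega>. ennreal (Z \<omega> * X \<omega>) \<partial>M) = ennreal p"
    and neg: "(\<integral>\<^sup>+\<omega>. ennreal (- (Z \<omega> * X \<omega>)) \<partial>M) = ennreal q"
    and "(\<lambda>\<omega>. Z \<omega> * X \<omega>) \<in> borel_measurable M"
    and integral: "(\<integral>\<omega>. Z \<omega> * X \<omega> \<partial>M) = p - q"
    by (rule integrableE[OF int])
  have "(\<integral>\<^sup>+\<omega>. ennreal (Z \<omega> * max (X \<omega>) 0) \<partial>M) = (\<integral>\<^sup>+\<omega>. ennreal (Z \<omega> * X \<omega>) \<partial>M)"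
    using Z_nonneg
    by (intro nn_integral_cong_AE, eventually_elim)
       (auto simp: max_def ennreal_neg mult_nonneg_nonpos)
  moreover have "(\<integral>\<^sup>+\<omega>. ennreal (Z \<omega> * max (- X \<omega>) 0) \<partial>M)
      = (\<integral>\<^sup>+\<omega>. ennreal (- (Z \<omega> * X \<omega>)) \<partial>M)"
    using Z_nonneg
    by (intro nn_integral_cong_AE, eventually_elim)
       (auto simp: max_def ennreal_neg mult_nonneg_nonpos)
  ultimately show ?thesis
    using \<open>0 \<le> p\<close> \<open>0 \<le> q\<close> by (simp add: neg_expect_def pos neg integral)
qed

lemma neg_expect_zero [simp]: "neg_expect M Z (\<lambda>\<omega>. 0) = 0"
  by (simp add: neg_expect_def)

lemma rho_zero:
  assumes "Q \<noteq> {}"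
  shows "rho M Q (\<lambda>\<omega>. 0) = 0"
  using assms by (simp add: rho_def)

lemma neg_expect_le_rho:
  assumes "Z \<in> Q"
  shows "neg_expect M Z X \<le> rho M Q X"
  unfolding rho_def using assms by (rule SUP_upper)

lemma excess_return_zero [simp]: "excess_return r d S0 S1 (\<lambda>i. 0) = (\<lambda>\<omega>. 0)"
  by (simp add: excess_return_def fun_eq_iff)

lemma mult_excess_return_eq_sum:
  "(\<lambda>\<omega>. Z \<omega> * excess_return r d S0 S1 \<pi> \<omega>)
     = (\<lambda>\<omega>. \<Sum>i\<in>{1..d}. \<pi> i * (Z \<omega> * (ret S0 S1 i \<omega> - r)))"
  by (simp add: excess_return_def sum_distrib_left mult_ac fun_eq_iff)

lemma
  assumes "Z \<in> mart_densities M r d S0 S1"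
  shows integrable_mart_density_mult_excess_return:
      "integrable M (\<lambda>\<omega>. Z \<omega> * excess_return r d S0 S1 \<pi> \<omega>)"
    and integral_mart_density_mult_excess_return:
      "(\<integral>\<omega>. Z \<omega> * excess_return r d S0 S1 \<pi> \<omega> \<partial>M) = 0"
proof -
  have int: "integrable M (\<lambda>\<omega>. Z \<omega> * (ret S0 S1 i \<omega> - r))"
    and zero: "(\<integral>\<omega>. Z \<omega> * (ret S0 S1 i \<omega> - r) \<partial>M) = 0" if "i \<in> {1..d}" for i
    using assms that by (auto simp: mart_densities_def)
  then show "integrable M (\<lambda>\<omega>. Z \<omega> * excess_return r d S0 S1 \<pi> \<omega>)"
    unfolding mult_excess_return_eq_sum by auto
  have "(\<integral>\<omega>. Z \<omega> * excess_return r d S0 S1 \<pi> \<omega> \<partial>M)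
      = (\<Sum>i\<in>{1..d}. \<pi> i * (\<integral>\<omega>. Z \<omega> * (ret S0 S1 i \<omega> - r) \<partial>M))"
    unfolding mult_excess_return_eq_sum using int by (simp add: integral_sum)
  also have "\<dots> = 0"
    using zero by simp
  finally show "(\<integral>\<omega>. Z \<omega> * excess_return r d S0 S1 \<pi> \<omega> \<partial>M) = 0" .
qed

lemma rho_excess_return_nonneg:
  assumes "Z \<in> Q" and "Z \<in> mart_densities M r d S0 S1"
  shows "0 \<le> rho M Q (excess_return r d S0 S1 \<pi>)"
proof -
  have "AE \<omega> in M. 0 \<le> Z \<omega>"
    using assms(2) by (simp add: mart_densities_def densities_def)
  then have "neg_expect M Z (excess_return r d S0 S1 \<pi>) = 0"
    using assms(2) by (simp add: neg_expect_eq_integral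
        integrable_mart_density_mult_excess_return integral_mart_density_mult_excess_return)
  then show ?thesis
    using neg_expect_le_rho[OF assms(1)] by metis
qed

theorem proposition4p14:
  fixes M :: "'a measure" and r :: real and d :: nat
    and S0 :: "nat \<Rightarrow> real" and S1 :: "nat \<Rightarrow> 'a \<Rightarrow> real"
    and L Q :: "('a \<Rightarrow> real) set"
  assumes "prob_space M"
    and "r > -1"
    and "\<forall>i\<in>{1..d}. S0 i > 0"
    and "\<forall>i\<in>{1..d}. S1 i \<in> borel_measurable M"
    and "nonredundant M r d S0 S1"
    and "\<forall>i\<in>{1..d}. integrable M (ret S0 S1 i)"
    and "\<exists>i\<in>{1..d}. (\<integral>\<omega>. ret S0 S1 i \<omega> \<partial>M) \<noteq> r"
    and "riesz_between M L"
    and "\<forall>\<pi>. excess_return r d S0 S1 \<pi> \<in> L"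
    and "Q \<subseteq> densities M"
    and "\<forall>Z1\<in>Q. \<forall>Z2\<in>Q. \<forall>t::real. 0 \<le> t \<and> t \<le> 1 \<longrightarrow> (\<lambda>\<omega>. t * Z1 \<omega> + (1 - t) * Z2 \<omega>) \<in> Q"
    and "(\<lambda>\<omega>. 1) \<in> Q"
    and "Q \<inter> mart_densities M r d S0 S1 \<noteq> {}"
  shows "\<not> strong_rho_arbitrage M Q r d S0 S1"
proof
  assume "strong_rho_arbitrage M Q r d S0 S1"
  then obtain \<pi> where less:
      "rho M Q (excess_return r d S0 S1 \<pi>) < rho M Q (excess_return r d S0 S1 (\<lambda>i. 0))"
    unfolding strong_rho_arbitrage_def by blast
  obtain Z where "Z \<in> Q" and "Z \<in> mart_densities M r d S0 S1"
    using assms(13) by blast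
  then have "0 \<le> rho M Q (excess_return r d S0 S1 \<pi>)" and "rho M Q (\<lambda>\<omega>. 0) = 0"
    by (auto intro: rho_excess_return_nonneg rho_zero)
  with less show False
    by simp
qed

end
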